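(* In the adjacency array model, any bounded-error quantum algorithm that decides whether an $n$-vertex undirected graph is bipartite requires $\Omega(n)$ queries, and any bounded-error quantum algorithm that decides whether an $n$-vertex undirected graph contains a cycle requires $\Omega(n)$ queries.
   Context: Adjacency array model: the degrees $d_1,\dots,d_n$ of the vertices are given for free, and for each vertex $i$ there is an oracle for an injective array $f_i:[d_i]\to[n]$ listing its neighbours in an arbitrary fixed order; query complexity counts only queries to the arrays $f_i$ (which may be made in superposition). Bounded error means success probability at least $2/3$ on every input. *)

theory Defs
  imports Complex_Main
begin

text \<open>An input on n vertices (labelled 0..n-1) is a degree sequence deg and arrays f,
  where f i k (k < deg i) is the k-th neighbour of vertex i.\<close>

definition adj_array :: "nat \<Rightarrow> (nat \<Rightarrow> nat) \<Rightarrow> (nat \<Rightarrow> nat \<Rightarrow> nat) \<Rightarrow> bool" where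
  "adj_array n deg f \<longleftrightarrow>
     (\<forall>i. n \<le> i \<longrightarrow> deg i = 0) \<and>
     (\<forall>i<n. inj_on (f i) {..<deg i} \<and> f i ` {..<deg i} \<subseteq> {..<n}) \<and>
     (\<forall>i<n. \<forall>k<deg i. f i k \<noteq> i \<and> (\<exists>k'<deg (f i k). f (f i k) k' = i))"

definition adj_edge :: "(nat \<Rightarrow> nat) \<Rightarrow> (nat \<Rightarrow> nat \<Rightarrow> nat) \<Rightarrow> nat \<Rightarrow> nat \<Rightarrow> bool" where
  "adj_edge deg f i j \<longleftrightarrow> (\<exists>k<deg i. f i k = j)"

definition graph_bipartite :: "(nat \<Rightarrow> nat \<Rightarrow> bool) \<Rightarrow> bool" where
  "graph_bipartite E \<longleftrightarrow> (\<exists>S. \<forall>i j. E i j \<longrightarrow> (i \<in> S \<longleftrightarrow> j \<notin> S))"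

definition graph_has_cycle :: "(nat \<Rightarrow> nat \<Rightarrow> bool) \<Rightarrow> bool" where
  "graph_has_cycle E \<longleftrightarrow> (\<exists>vs. length vs \<ge> 3 \<and> distinct vs \<and>
      (\<forall>i. i + 1 < length vs \<longrightarrow> E (vs ! i) (vs ! (i + 1))) \<and> E (last vs) (hd vs))"

type_synonym qbas = "nat \<times> nat \<times> nat \<times> nat"
type_synonym qstate = "qbas \<Rightarrow> complex"
type_synonym qop = "qbas \<Rightarrow> qbas \<Rightarrow> complex"

text \<open>Computational basis |i, j, b, w>: i = vertex register, j = index register,
  b = answer register (all in {0..n-1}), w = workspace register in {0..m-1}.\<close>
definition qbasis :: "nat \<Rightarrow> nat \<Rightarrow> qbas set" where
  "qbasis n m = {..<n} \<times> {..<n} \<times> {..<n} \<times> {..<m}"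

definition apply_op :: "nat \<Rightarrow> nat \<Rightarrow> qop \<Rightarrow> qstate \<Rightarrow> qstate" where
  "apply_op n m U \<psi> = (\<lambda>x. if x \<in> qbasis n m then (\<Sum>y\<in>qbasis n m. U x y * \<psi> y) else 0)"

definition is_unitary :: "nat \<Rightarrow> nat \<Rightarrow> qop \<Rightarrow> bool" where
  "is_unitary n m U \<longleftrightarrow> (\<forall>x\<in>qbasis n m. \<forall>y\<in>qbasis n m.
      (\<Sum>z\<in>qbasis n m. cnj (U z x) * U z y) = (if x = y then 1 else 0))"

text \<open>Query operator: |i,j,b,w> \<mapsto> |i,j,(b + f_i(j)) mod n,w> if j < d_i, identity otherwise.\<close>
definition query_op :: "nat \<Rightarrow> nat \<Rightarrow> (nat \<Rightarrow> nat) \<Rightarrow> (nat \<Rightarrow> nat \<Rightarrow> nat) \<Rightarrow> qstate \<Rightarrow> qstate" where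
  "query_op n m deg f \<psi> = (\<lambda>(i, j, b, w).
     if (i, j, b, w) \<in> qbasis n m then
       (if j < deg i then \<psi> (i, j, (b + n - f i j) mod n, w) else \<psi> (i, j, b, w))
     else 0)"

definition init_state :: qstate where
  "init_state = (\<lambda>x. if x = (0, 0, 0, 0) then 1 else 0)"

text \<open>State after t queries: U_t O U_(t-1) O ... O U_0 |0>.  The unitaries may depend on
  the degree sequence (degrees are given for free).\<close>
fun run :: "nat \<Rightarrow> nat \<Rightarrow> (nat \<Rightarrow> (nat \<Rightarrow> nat) \<Rightarrow> qop) \<Rightarrow> (nat \<Rightarrow> nat) \<Rightarrow> (nat \<Rightarrow> nat \<Rightarrow> nat)
            \<Rightarrow> nat \<Rightarrow> qstate" where
  "run n m U deg f 0 = apply_op n m (U 0 deg) init_state"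
| "run n m U deg f (Suc t) = apply_op n m (U (Suc t) deg) (query_op n m deg f (run n m U deg f t))"

definition accept_prob :: "nat \<Rightarrow> nat \<Rightarrow> nat \<Rightarrow> (nat \<Rightarrow> (nat \<Rightarrow> nat) \<Rightarrow> qop)
     \<Rightarrow> ((nat \<Rightarrow> nat) \<Rightarrow> qbas set) \<Rightarrow> (nat \<Rightarrow> nat) \<Rightarrow> (nat \<Rightarrow> nat \<Rightarrow> nat) \<Rightarrow> real" where
  "accept_prob n m T U Acc deg f =
     (\<Sum>x\<in>qbasis n m \<inter> Acc deg. (cmod (run n m U deg f T x))\<^sup>2)"

definition decides_bounded_error :: "nat \<Rightarrow> ((nat \<Rightarrow> nat \<Rightarrow> bool) \<Rightarrow> bool) \<Rightarrow> nat \<Rightarrow> nat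
     \<Rightarrow> (nat \<Rightarrow> (nat \<Rightarrow> nat) \<Rightarrow> qop) \<Rightarrow> ((nat \<Rightarrow> nat) \<Rightarrow> qbas set) \<Rightarrow> bool" where
  "decides_bounded_error n P m T U Acc \<longleftrightarrow>
     (\<forall>deg t. t \<le> T \<longrightarrow> is_unitary n m (U t deg)) \<and>
     (\<forall>deg f. adj_array n deg f \<longrightarrow>
        (P (adj_edge deg f) \<longrightarrow> accept_prob n m T U Acc deg f \<ge> 2/3) \<and>
        (\<not> P (adj_edge deg f) \<longrightarrow> accept_prob n m T U Acc deg f \<le> 1/3))"

end

theory Submission
  imports Defs
begin

text \<open>A hybrid argument on ladder graphs.  Vertex 2c + p (c \<le> N, p \<in> {0, 1}) is strand p
  of column c; between columns c and c + 1 the two strands run straight or cross according to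
  whether c \<in> s, and one extra edge joins 1 and 2N + 1.  For odd |s| this graph is a
  Hamiltonian path, hence bipartite and acyclic; for even |s| (and even N) the strand through
  vertex 1 closes into a cycle of odd length N + 1.  Toggling c in s therefore flips both
  properties, but changes only the arrays of the vertices in columns c and c + 1.

  For a T-query algorithm consider the sum, over all s and c < N, of the overlaps
  |<\<psi>_s, \<psi>_(s toggled at c)>| of the states.  It starts at 2^N N.  A query decreases each
  overlap by at most the weight both states put on columns c and c + 1, and every vertex lies
  in at most two such windows, so one query costs at most 4 \<cdot> 2^N.  Bounded error forces every
  final overlap down to 17/18, so N/18 \<le> 4T, and N can be taken about n/4.\<close>

definition qinner :: "nat \<Rightarrow> nat \<Rightarrow> qstate \<Rightarrow> qstate \<Rightarrow> complex" where
  "qinner n m \<phi> \<psi> = (\<Sum>x\<in>qbasis n m. cnj (\<phi> x) * \<psi> x)"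

definition vertex_weight :: "nat \<Rightarrow> nat \<Rightarrow> nat set \<Rightarrow> qstate \<Rightarrow> real" where
  "vertex_weight n m V \<phi> = (\<Sum>x\<in>qbasis n m \<inter> fst -` V. (cmod (\<phi> x))\<^sup>2)"

lemma finite_qbasis [simp]: "finite (qbasis n m)"
  by (simp add: qbasis_def)

lemma qinner_commute: "qinner n m \<phi> \<psi> = cnj (qinner n m \<psi> \<phi>)"
  by (simp add: qinner_def mult.commute)

lemma qinner_self: "qinner n m \<phi> \<phi> = of_real (\<Sum>x\<in>qbasis n m. (cmod (\<phi> x))\<^sup>2)"
  unfolding qinner_def of_real_sum
  by (intro sum.cong refl) (subst complex_norm_square, simp add: mult.commute)

lemma cmod_cnj_mult_le: "cmod (cnj u * v) \<le> ((cmod u)\<^sup>2 + (cmod v)\<^sup>2) / 2"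
  using sum_squares_bound[of "cmod u" "cmod v"] by (simp add: norm_mult)

lemma qinner_apply_op:
  assumes U: "is_unitary n m U"
  shows "qinner n m (apply_op n m U \<phi>) (apply_op n m U \<psi>) = qinner n m \<phi> \<psi>"
proof -
  let ?Q = "qbasis n m"
  have "qinner n m (apply_op n m U \<phi>) (apply_op n m U \<psi>) =
     (\<Sum>x\<in>?Q. cnj (\<Sum>y\<in>?Q. U x y * \<phi> y) * (\<Sum>z\<in>?Q. U x z * \<psi> z))"
    by (simp add: qinner_def apply_op_def)
  also have "\<dots> = (\<Sum>x\<in>?Q. \<Sum>y\<in>?Q. \<Sum>z\<in>?Q. cnj (\<phi> y) * \<psi> z * (cnj (U x y) * U x z))"
    unfolding cnj_sum sum_product by (intro sum.cong refl) (simp only: complex_cnj_mult mult_ac)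
  also have "\<dots> = (\<Sum>y\<in>?Q. \<Sum>z\<in>?Q. \<Sum>x\<in>?Q. cnj (\<phi> y) * \<psi> z * (cnj (U x y) * U x z))"
    by (subst sum.swap) (rule sum.cong[OF refl], rule sum.swap)
  also have "\<dots> = (\<Sum>y\<in>?Q. \<Sum>z\<in>?Q. cnj (\<phi> y) * \<psi> z * (\<Sum>x\<in>?Q. cnj (U x y) * U x z))"
    by (simp add: sum_distrib_left)
  also have "\<dots> = (\<Sum>y\<in>?Q. \<Sum>z\<in>?Q. cnj (\<phi> y) * \<psi> z * (if y = z then 1 else 0))"
    using U by (intro sum.cong refl) (simp add: is_unitary_def)
  also have "\<dots> = qinner n m \<phi> \<psi>"
    by (simp add: qinner_def if_distrib[of "\<lambda>x. _ * x"] sum.delta cong: if_cong)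
  finally show ?thesis .
qed

definition query_perm :: "nat \<Rightarrow> (nat \<Rightarrow> nat) \<Rightarrow> (nat \<Rightarrow> nat \<Rightarrow> nat) \<Rightarrow> qbas \<Rightarrow> qbas" where
  "query_perm n deg f = (\<lambda>(i, j, b, w). (i, j, if j < deg i then (b + n - f i j) mod n else b, w))"

lemma query_op_eq_query_perm:
  "x \<in> qbasis n m \<Longrightarrow> query_op n m deg f \<phi> x = \<phi> (query_perm n deg f x)"
  by (cases x) (simp add: query_op_def query_perm_def)

lemma add_diff_mod_cancel:
  assumes "(b::nat) < n" "b' < n" "c \<le> n" "(b + n - c) mod n = (b' + n - c) mod n"
  shows "b = b'"
proof -
  have "(b + n - c + c) mod n = (b' + n - c + c) mod n"
    using assms(4) by (metis mod_add_left_eq)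
  then show ?thesis using assms(1-3) by simp
qed

lemma bij_betw_query_perm:
  assumes f: "\<forall>i<n. \<forall>j<deg i. f i j < n"
  shows "bij_betw (query_perm n deg f) (qbasis n m \<inter> fst -` A) (qbasis n m \<inter> fst -` A)"
proof -
  let ?B = "qbasis n m \<inter> fst -` A"
  have into: "query_perm n deg f ` ?B \<subseteq> ?B"
    by (auto simp: query_perm_def qbasis_def)
  have "inj_on (query_perm n deg f) ?B"
  proof (rule inj_onI)
    fix x y assume "x \<in> ?B" "y \<in> ?B" and eq: "query_perm n deg f x = query_perm n deg f y"
    obtain i j b w where x: "x = (i, j, b, w)" by (cases x)
    obtain i' j' b' w' where y: "y = (i', j', b', w')" by (cases y)
    have same: "i' = i" "j' = j" "w' = w" using eq by (auto simp: x y query_perm_def)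
    have less: "i < n" "b < n" "b' < n" using \<open>x \<in> ?B\<close> \<open>y \<in> ?B\<close> by (auto simp: x y qbasis_def)
    have "b = b'"
    proof (cases "j < deg i")
      case True
      with f less have "f i j \<le> n" by (simp add: less_imp_le)
      with True less eq show ?thesis
        by (intro add_diff_mod_cancel[of b n b' "f i j"]) (simp_all add: x y same query_perm_def)
    next
      case False
      with eq show ?thesis by (simp add: x y same query_perm_def)
    qed
    then show "x = y" by (simp add: x y same)
  qed
  with into show ?thesis
    by (simp add: bij_betw_def endo_inj_surj)
qed

lemma qinner_query_op_diff:
  assumes f: "\<forall>i<n. \<forall>j<deg i. f i j < n" and f': "\<forall>i<n. \<forall>j<deg i. f' i j < n"
    and agree: "\<And>i j. i \<notin> V \<Longrightarrow> j < deg i \<Longrightarrow> f i j = f' i j"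
  shows "cmod (qinner n m (query_op n m deg f \<phi>) (query_op n m deg f' \<phi>') - qinner n m \<phi> \<phi>')
           \<le> vertex_weight n m V \<phi> + vertex_weight n m V \<phi>'"
proof -
  let ?Q = "qbasis n m" and ?\<sigma> = "query_perm n deg f" and ?\<sigma>' = "query_perm n deg f'"
  let ?In = "?Q \<inter> fst -` V" and ?Out = "?Q \<inter> fst -` (- V)"
  define a where "a x = (cmod (\<phi> x))\<^sup>2" for x
  define b where "b x = (cmod (\<phi>' x))\<^sup>2" for x
  define g where "g x = cnj (\<phi> x) * \<phi>' x" for x
  define h where "h x = cnj (\<phi> (?\<sigma> x)) * \<phi>' (?\<sigma>' x)" for x
  have split: "(\<Sum>x\<in>?Q. k x) = (\<Sum>x\<in>?In. k x) + (\<Sum>x\<in>?Out. k x)" for k :: "qbas \<Rightarrow> complex"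
    using sum.Int_Diff[OF finite_qbasis, of k n m "fst -` V"] by (simp add: Diff_eq vimage_Compl)
  have "h x = g (?\<sigma> x)" if "x \<in> ?Out" for x
    using that agree by (cases x) (auto simp: h_def g_def query_perm_def)
  then have "(\<Sum>x\<in>?Out. h x) = (\<Sum>x\<in>?Out. g (?\<sigma> x))"
    by (rule sum.cong[OF refl])
  also have "\<dots> = (\<Sum>x\<in>?Out. g x)"
    by (rule sum.reindex_bij_betw[OF bij_betw_query_perm[OF f]])
  finally have out: "(\<Sum>x\<in>?Out. h x) = (\<Sum>x\<in>?Out. g x)" .
  have qinner_query: "qinner n m (query_op n m deg f \<phi>) (query_op n m deg f' \<phi>') = (\<Sum>x\<in>?Q. h x)"
    unfolding qinner_def h_def by (intro sum.cong refl) (simp add: query_op_eq_query_perm)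
  have qinner_plain: "qinner n m \<phi> \<phi>' = (\<Sum>x\<in>?Q. g x)"
    by (simp add: qinner_def g_def)
  have "qinner n m (query_op n m deg f \<phi>) (query_op n m deg f' \<phi>') - qinner n m \<phi> \<phi>'
      = (\<Sum>x\<in>?In. h x - g x)"
    unfolding qinner_query qinner_plain split[of h] split[of g] out by (simp add: sum_subtractf)
  also have "cmod \<dots> \<le> (\<Sum>x\<in>?In. cmod (h x) + cmod (g x))"
    by (rule order.trans[OF norm_sum sum_mono]) (rule norm_triangle_ineq4)
  also have "\<dots> \<le> (\<Sum>x\<in>?In. (a (?\<sigma> x) + b (?\<sigma>' x)) / 2 + (a x + b x) / 2)"
    unfolding a_def b_def g_def h_def by (intro sum_mono add_mono cmod_cnj_mult_le)
  also have "\<dots> = ((\<Sum>x\<in>?In. a (?\<sigma> x)) + (\<Sum>x\<in>?In. b (?\<sigma>' x))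
      + (\<Sum>x\<in>?In. a x) + (\<Sum>x\<in>?In. b x)) / 2"
    unfolding sum.distrib sum_divide_distrib[symmetric] by (simp add: add_divide_distrib)
  also have "\<dots> = vertex_weight n m V \<phi> + vertex_weight n m V \<phi>'"
    unfolding sum.reindex_bij_betw[OF bij_betw_query_perm[OF f]]
      sum.reindex_bij_betw[OF bij_betw_query_perm[OF f']]
    by (simp add: vertex_weight_def a_def b_def)
  finally show ?thesis .
qed

lemma qinner_query_op:
  assumes "\<forall>i<n. \<forall>j<deg i. f i j < n"
  shows "qinner n m (query_op n m deg f \<phi>) (query_op n m deg f \<psi>) = qinner n m \<phi> \<psi>"
  using qinner_query_op_diff[OF assms assms, of "{}" m \<phi> \<psi>] by (simp add: vertex_weight_def)

lemma run_norm:
  assumes U: "\<forall>t\<le>T. is_unitary n m (U t deg)" and f: "\<forall>i<n. \<forall>j<deg i. f i j < n"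
    and "0 < n" "0 < m" "t \<le> T"
  shows "(\<Sum>x\<in>qbasis n m. (cmod (run n m U deg f t x))\<^sup>2) = 1"
proof -
  have "qinner n m (run n m U deg f t) (run n m U deg f t) = 1"
    using \<open>t \<le> T\<close>
  proof (induction t)
    case 0
    have "qinner n m init_state init_state = 1"
      using \<open>0 < n\<close> \<open>0 < m\<close> by (simp add: qinner_def init_state_def qbasis_def if_distrib cong: if_cong)
    with 0 show ?case using U by (simp add: qinner_apply_op)
  next
    case (Suc t)
    then show ?case using U by (simp add: qinner_apply_op qinner_query_op[OF f])
  qed
  then have "(of_real (\<Sum>x\<in>qbasis n m. (cmod (run n m U deg f t x))\<^sup>2) :: complex) = 1"
    by (simp only: qinner_self)
  then show ?thesis by (simp only: of_real_eq_1_iff)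
qed

lemma mult_le_weighted_squares:
  assumes "0 < c"
  shows "(a::real) * b \<le> c / 2 * a\<^sup>2 + b\<^sup>2 / (2 * c)"
proof -
  have "0 \<le> (c * a - b)\<^sup>2 / (2 * c)" using assms by simp
  also have "\<dots> = c / 2 * a\<^sup>2 + b\<^sup>2 / (2 * c) - a * b"
    using assms by (simp add: power2_eq_square field_simps)
  finally show ?thesis by simp
qed

lemma cmod_inner_le_if_mass_gap:
  assumes "finite Q"
    and \<psi>: "(\<Sum>x\<in>Q. (cmod (\<psi> x))\<^sup>2) = 1" and \<phi>: "(\<Sum>x\<in>Q. (cmod (\<phi> x))\<^sup>2) = 1"
    and gap: "2/3 \<le> (\<Sum>x\<in>Q \<inter> A. (cmod (\<psi> x))\<^sup>2)" "(\<Sum>x\<in>Q \<inter> A. (cmod (\<phi> x))\<^sup>2) \<le> 1/3"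
  shows "cmod (\<Sum>x\<in>Q. cnj (\<psi> x) * \<phi> x) \<le> 17/18"
proof -
  let ?a = "\<lambda>x. cmod (\<psi> x)" and ?b = "\<lambda>x. cmod (\<phi> x)"
  have split: "(\<Sum>x\<in>Q. k x) = (\<Sum>x\<in>Q \<inter> A. k x) + (\<Sum>x\<in>Q - A. k x)" for k :: "_ \<Rightarrow> real"
    using \<open>finite Q\<close> by (rule sum.Int_Diff)
  have "cmod (\<Sum>x\<in>Q. cnj (\<psi> x) * \<phi> x) \<le> (\<Sum>x\<in>Q. ?a x * ?b x)"
    using norm_sum[of "\<lambda>x. cnj (\<psi> x) * \<phi> x" Q] by (simp add: norm_mult)
  also have "\<dots> \<le> (\<Sum>x\<in>Q \<inter> A. ?a x ^ 2 / 3 + 3/4 * ?b x ^ 2) + (\<Sum>x\<in>Q - A. 3/4 * ?a x ^ 2 + ?b x ^ 2 / 3)"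
    unfolding split[of "\<lambda>x. ?a x * ?b x"]
    using mult_le_weighted_squares[of "2/3"] mult_le_weighted_squares[of "3/2"]
    by (intro add_mono sum_mono) (simp_all add: field_simps)
  also have "\<dots> \<le> 17/18"
    using \<psi> \<phi> gap unfolding split[of "\<lambda>x. ?a x ^ 2"] split[of "\<lambda>x. ?b x ^ 2"]
    by (simp add: sum.distrib sum_divide_distrib[symmetric] sum_distrib_left[symmetric])
  finally show ?thesis .
qed

lemma sum_vertex_weight_le:
  assumes "finite K" and overlap: "\<And>i. card {k \<in> K. i \<in> W k} \<le> r"
  shows "(\<Sum>k\<in>K. vertex_weight n m (W k) \<phi>) \<le> r * (\<Sum>x\<in>qbasis n m. (cmod (\<phi> x))\<^sup>2)"
proof -
  let ?a = "\<lambda>x. (cmod (\<phi> x))\<^sup>2"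
  have "(\<Sum>k\<in>K. vertex_weight n m (W k) \<phi>) = (\<Sum>x\<in>qbasis n m. \<Sum>k\<in>K. if fst x \<in> W k then ?a x else 0)"
    unfolding vertex_weight_def by (simp add: sum.inter_restrict) (rule sum.swap)
  also have "\<dots> = (\<Sum>x\<in>qbasis n m. card {k \<in> K. fst x \<in> W k} * ?a x)"
    using \<open>finite K\<close> by (simp add: sum.If_cases Int_def)
  also have "\<dots> \<le> (\<Sum>x\<in>qbasis n m. r * ?a x)"
    using overlap by (intro sum_mono mult_right_mono) simp_all
  finally show ?thesis by (simp add: sum_distrib_left)
qed

lemma bij_betw_sym_diff_singleton: "k \<in> A \<Longrightarrow> bij_betw (\<lambda>s. sym_diff s {k}) (Pow A) (Pow A)"
  by (rule bij_betw_byWitness[where f' = "\<lambda>s. sym_diff s {k}"]) auto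

lemma adj_array_nbr_less: "adj_array n deg f \<Longrightarrow> \<forall>i<n. \<forall>j<deg i. f i j < n"
  by (auto simp: adj_array_def)

lemma cmod_qinner_run_Suc_ge:
  assumes U: "is_unitary n m (U (Suc t) deg)"
    and f: "\<forall>i<n. \<forall>j<deg i. f i j < n" and f': "\<forall>i<n. \<forall>j<deg i. f' i j < n"
    and agree: "\<And>i j. i \<notin> V \<Longrightarrow> j < deg i \<Longrightarrow> f i j = f' i j"
  shows "cmod (qinner n m (run n m U deg f t) (run n m U deg f' t))
           - vertex_weight n m V (run n m U deg f t) - vertex_weight n m V (run n m U deg f' t)
         \<le> cmod (qinner n m (run n m U deg f (Suc t)) (run n m U deg f' (Suc t)))"
proof -
  let ?\<phi> = "run n m U deg f t" and ?\<phi>' = "run n m U deg f' t"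
  let ?a = "qinner n m ?\<phi> ?\<phi>'" and ?b = "qinner n m (query_op n m deg f ?\<phi>) (query_op n m deg f' ?\<phi>')"
  have "cmod (?b - ?a) \<le> vertex_weight n m V ?\<phi> + vertex_weight n m V ?\<phi>'"
    using qinner_query_op_diff[OF f f' agree] .
  moreover have "cmod ?a - cmod ?b \<le> cmod (?b - ?a)"
    using norm_triangle_ineq2[of ?a ?b] by (simp add: norm_minus_commute)
  ultimately show ?thesis by (simp add: qinner_apply_op[OF U])
qed

locale toggle_sensitive_inputs =
  fixes n m T :: nat and U :: "nat \<Rightarrow> (nat \<Rightarrow> nat) \<Rightarrow> qop" and Acc :: "(nat \<Rightarrow> nat) \<Rightarrow> qbas set"
    and P :: "(nat \<Rightarrow> nat \<Rightarrow> bool) \<Rightarrow> bool" and N :: nat and deg :: "nat \<Rightarrow> nat"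
    and F :: "nat set \<Rightarrow> nat \<Rightarrow> nat \<Rightarrow> nat" and W :: "nat \<Rightarrow> nat set"
  assumes decides: "decides_bounded_error n P m T U Acc"
    and inputs: "\<And>s. s \<subseteq> {..<N} \<Longrightarrow> adj_array n deg (F s)"
    and local: "\<And>s k i j. i \<notin> W k \<Longrightarrow> F (sym_diff s {k}) i j = F s i j"
    and overlap: "\<And>i. card {k \<in> {..<N}. i \<in> W k} \<le> 2"
    and sensitive: "\<And>s k. s \<subseteq> {..<N} \<Longrightarrow> k < N \<Longrightarrow>
                      P (adj_edge deg (F (sym_diff s {k}))) \<noteq> P (adj_edge deg (F s))"
    and N_pos: "0 < N"
begin

abbreviation state :: "nat set \<Rightarrow> nat \<Rightarrow> qstate" where
  "state s t \<equiv> run n m U deg (F s) t"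

lemma unitary: "t \<le> T \<Longrightarrow> is_unitary n m (U t deg)"
  using decides by (simp add: decides_bounded_error_def)

lemma accept_prob_bounds:
  assumes "s \<subseteq> {..<N}"
  shows "P (adj_edge deg (F s)) \<Longrightarrow> 2/3 \<le> (\<Sum>x\<in>qbasis n m \<inter> Acc deg. (cmod (state s T x))\<^sup>2)"
    and "\<not> P (adj_edge deg (F s)) \<Longrightarrow> (\<Sum>x\<in>qbasis n m \<inter> Acc deg. (cmod (state s T x))\<^sup>2) \<le> 1/3"
  using decides inputs[OF assms] by (auto simp: decides_bounded_error_def accept_prob_def)

lemma registers_nonempty: "0 < n" "0 < m"
proof -
  have "qbasis n m \<noteq> {}"
  proof
    assume empty: "qbasis n m = {}"
    have "{} \<subseteq> {..<N}" "sym_diff {} {0} \<subseteq> {..<N}" using N_pos by auto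
    with empty show False
      using sensitive[of "{}" 0] N_pos accept_prob_bounds by (cases "P (adj_edge deg (F {}))") force+
  qed
  then show "0 < n" "0 < m" by (auto simp: qbasis_def)
qed

lemma state_norm: "s \<subseteq> {..<N} \<Longrightarrow> t \<le> T \<Longrightarrow> (\<Sum>x\<in>qbasis n m. (cmod (state s t x))\<^sup>2) = 1"
  using run_norm[OF _ adj_array_nbr_less[OF inputs] registers_nonempty] unitary by blast

definition progress :: "nat \<Rightarrow> real" where
  "progress t = (\<Sum>s\<in>Pow {..<N}. \<Sum>k<N. cmod (qinner n m (state s t) (state (sym_diff s {k}) t)))"

lemma progress_0: "progress 0 = 2 ^ N * real N"
proof -
  have "qinner n m (state s 0) (state s' 0) = 1" for s s'
  proof -
    have "qinner n m (state s 0) (state s' 0) = qinner n m (state {} 0) (state {} 0)" by simp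
    also have "\<dots> = 1" using state_norm[of "{}" 0] by (simp only: qinner_self) simp
    finally show ?thesis .
  qed
  then show ?thesis by (simp add: progress_def card_Pow)
qed

lemma sum_window_weights_le:
  assumes "t \<le> T"
  shows "(\<Sum>s\<in>Pow {..<N}. \<Sum>k<N. vertex_weight n m (W k) (state s t)) \<le> 2 * 2 ^ N"
proof -
  have "(\<Sum>k<N. vertex_weight n m (W k) (state s t)) \<le> 2" if "s \<subseteq> {..<N}" for s
    using sum_vertex_weight_le[of "{..<N}" W 2 n m "state s t"] overlap state_norm[OF that assms]
    by simp
  then have "(\<Sum>s\<in>Pow {..<N}. \<Sum>k<N. vertex_weight n m (W k) (state s t)) \<le> (\<Sum>s\<in>Pow {..<N}. 2)"
    by (intro sum_mono) simp
  then show ?thesis by (simp add: card_Pow)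
qed

lemma sum_window_weights_toggled:
  "(\<Sum>s\<in>Pow {..<N}. \<Sum>k<N. vertex_weight n m (W k) (state (sym_diff s {k}) t))
     = (\<Sum>s\<in>Pow {..<N}. \<Sum>k<N. vertex_weight n m (W k) (state s t))"
proof -
  have "(\<Sum>s\<in>Pow {..<N}. vertex_weight n m (W k) (state (sym_diff s {k}) t))
      = (\<Sum>s\<in>Pow {..<N}. vertex_weight n m (W k) (state s t))" if "k < N" for k
    using that by (intro sum.reindex_bij_betw bij_betw_sym_diff_singleton) simp
  then show ?thesis by (subst (1 2) sum.swap) simp
qed

lemma progress_Suc:
  assumes "t < T"
  shows "progress t - 4 * 2 ^ N \<le> progress (Suc t)"
proof -
  let ?w = "\<lambda>s k. vertex_weight n m (W k) (state s t)"
  have "progress t - (\<Sum>s\<in>Pow {..<N}. \<Sum>k<N. ?w s k) - (\<Sum>s\<in>Pow {..<N}. \<Sum>k<N. ?w (sym_diff s {k}) k)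
      = (\<Sum>s\<in>Pow {..<N}. \<Sum>k<N. cmod (qinner n m (state s t) (state (sym_diff s {k}) t))
            - ?w s k - ?w (sym_diff s {k}) k)"
    by (simp add: progress_def sum_subtractf)
  also have "\<dots> \<le> progress (Suc t)"
    unfolding progress_def
  proof (intro sum_mono)
    fix s k assume "s \<in> Pow {..<N}" "k \<in> {..<N}"
    then have "s \<subseteq> {..<N}" "sym_diff s {k} \<subseteq> {..<N}" by auto
    then show "cmod (qinner n m (state s t) (state (sym_diff s {k}) t)) - ?w s k - ?w (sym_diff s {k}) k
        \<le> cmod (qinner n m (state s (Suc t)) (state (sym_diff s {k}) (Suc t)))"
      using assms local
      by (intro cmod_qinner_run_Suc_ge unitary adj_array_nbr_less inputs) auto
  qed
  finally show ?thesis
    using sum_window_weights_le[of t] sum_window_weights_toggled[of t] assms by simp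
qed

lemma progress_lower: "t \<le> T \<Longrightarrow> 2 ^ N * (real N - 4 * real t) \<le> progress t"
proof (induction t)
  case 0
  then show ?case by (simp add: progress_0)
next
  case (Suc t)
  have "2 ^ N * (real N - 4 * real (Suc t)) = 2 ^ N * (real N - 4 * real t) - 4 * 2 ^ N"
    by (simp add: algebra_simps)
  with Suc progress_Suc[of t] show ?case by simp
qed

lemma cmod_qinner_final_le:
  assumes "s \<subseteq> {..<N}" "k < N"
  shows "cmod (qinner n m (state s T) (state (sym_diff s {k}) T)) \<le> 17/18"
proof -
  have le: "cmod (qinner n m (state s1 T) (state s2 T)) \<le> 17/18"
    if "s1 \<subseteq> {..<N}" "s2 \<subseteq> {..<N}" "P (adj_edge deg (F s1))" "\<not> P (adj_edge deg (F s2))" for s1 s2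
    unfolding qinner_def using that
    by (intro cmod_inner_le_if_mass_gap[where A = "Acc deg"] state_norm accept_prob_bounds) auto
  have toggled: "sym_diff s {k} \<subseteq> {..<N}" using assms by auto
  show ?thesis
  proof (cases "P (adj_edge deg (F s))")
    case True
    with le[OF assms(1) toggled] sensitive[OF assms] show ?thesis by simp
  next
    case False
    with le[OF toggled assms(1)] sensitive[OF assms] show ?thesis
      by (subst qinner_commute) simp
  qed
qed

lemma progress_final: "progress T \<le> 17/18 * 2 ^ N * real N"
proof -
  have "progress T \<le> (\<Sum>s\<in>Pow {..<N}. \<Sum>k<N. 17/18)"
    unfolding progress_def using cmod_qinner_final_le by (intro sum_mono) auto
  then show ?thesis by (simp add: card_Pow)
qed

theorem queries_lower_bound: "real N \<le> 72 * real T"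
proof -
  have "2 ^ N * real N \<le> 2 ^ N * (72 * real T)"
    using progress_lower[of T] progress_final by (simp only: ring_distribs) linarith
  then show ?thesis by simp
qed

end

definition ladder_vertex :: "nat \<Rightarrow> bool \<Rightarrow> nat" where
  "ladder_vertex c p = 2 * c + of_bool p"

lemma ladder_vertex_div [simp]: "ladder_vertex c p div 2 = c"
  by (simp add: ladder_vertex_def)

lemma odd_ladder_vertex [simp]: "odd (ladder_vertex c p) = p"
  by (simp add: ladder_vertex_def)

lemma ladder_vertex_eq_iff [simp]: "ladder_vertex c p = ladder_vertex c' p' \<longleftrightarrow> c = c' \<and> p = p'"
proof
  assume "ladder_vertex c p = ladder_vertex c' p'"
  then have "ladder_vertex c p div 2 = ladder_vertex c' p' div 2" "odd (ladder_vertex c p) = odd (ladder_vertex c' p')"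
    by simp_all
  then show "c = c' \<and> p = p'" by simp
qed simp

lemma ladder_vertex_div_odd: "ladder_vertex (v div 2) (odd v) = v"
  by (simp add: ladder_vertex_def)

lemma ladder_vertex_le: "ladder_vertex c p \<le> 2 * c + 1"
  by (simp add: ladder_vertex_def)

definition ladder_next :: "nat set \<Rightarrow> nat \<Rightarrow> nat" where
  "ladder_next s v = ladder_vertex (Suc (v div 2)) (odd v \<noteq> (v div 2 \<in> s))"

definition ladder_prev :: "nat set \<Rightarrow> nat \<Rightarrow> nat" where
  "ladder_prev s v = ladder_vertex (v div 2 - 1) (odd v \<noteq> (v div 2 - 1 \<in> s))"

definition ladder_deg :: "nat \<Rightarrow> nat \<Rightarrow> nat" where
  "ladder_deg N v = (if v = 0 \<or> v = 2 * N then 1 else if v < 2 * N + 2 then 2 else 0)"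

definition ladder_nbr :: "nat \<Rightarrow> nat set \<Rightarrow> nat \<Rightarrow> nat \<Rightarrow> nat" where
  "ladder_nbr N s v j =
     (if v = 0 then ladder_next s v
      else if v = 1 then (if j = 0 then ladder_next s v else 2 * N + 1)
      else if v = 2 * N then ladder_prev s v
      else if v = 2 * N + 1 then (if j = 0 then ladder_prev s v else 1)
      else if j = 0 then ladder_prev s v else ladder_next s v)"

abbreviation ladder_edge :: "nat \<Rightarrow> nat set \<Rightarrow> nat \<Rightarrow> nat \<Rightarrow> bool" where
  "ladder_edge N s \<equiv> adj_edge (ladder_deg N) (ladder_nbr N s)"

lemma ladder_next_div [simp]: "ladder_next s v div 2 = Suc (v div 2)"
  by (simp add: ladder_next_def)

lemma odd_ladder_next [simp]: "odd (ladder_next s v) = (odd v \<noteq> (v div 2 \<in> s))"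
  by (simp add: ladder_next_def)

lemma ladder_prev_div [simp]: "ladder_prev s v div 2 = v div 2 - 1"
  by (simp add: ladder_prev_def)

lemma odd_ladder_prev [simp]: "odd (ladder_prev s v) = (odd v \<noteq> (v div 2 - 1 \<in> s))"
  by (simp add: ladder_prev_def)

lemma ladder_prev_next [simp]: "ladder_prev s (ladder_next s v) = v"
  by (cases "odd v") (simp_all add: ladder_prev_def ladder_vertex_def)

lemma ladder_next_prev: "0 < v div 2 \<Longrightarrow> ladder_next s (ladder_prev s v) = v"
  by (cases "odd v") (simp_all add: ladder_next_def ladder_vertex_def)

lemma ladder_edge_iff:
  assumes "2 \<le> N"
  shows "ladder_edge N s v w \<longleftrightarrow> v < 2 * N + 2 \<and>
     (v div 2 < N \<and> w = ladder_next s v \<or> 0 < v div 2 \<and> w = ladder_prev s v \<or>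
      v = 1 \<and> w = 2 * N + 1 \<or> v = 2 * N + 1 \<and> w = 1)"
proof -
  consider "v = 0" | "v = 1" | "v = 2 * N" | "v = 2 * N + 1" | "2 \<le> v \<and> v < 2 * N" | "2 * N + 2 \<le> v"
    by linarith
  then show ?thesis
    using assms by cases (auto simp: adj_edge_def ladder_deg_def ladder_nbr_def less_2_cases_iff)
qed

lemma ladder_edge_sym:
  assumes N: "2 \<le> N" and e: "ladder_edge N s v w"
  shows "ladder_edge N s w v \<and> v \<noteq> w \<and> v < 2 * N + 2 \<and> w < 2 * N + 2"
proof -
  have v: "v < 2 * N + 2" using e ladder_edge_iff[OF N] by blast
  consider "v div 2 < N" "w = ladder_next s v" | "0 < v div 2" "w = ladder_prev s v"
    | "v = 1 \<and> w = 2 * N + 1 \<or> v = 2 * N + 1 \<and> w = 1"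
    using e unfolding ladder_edge_iff[OF N] by (elim conjE disjE) auto
  then show ?thesis
  proof cases
    case 1
    have "w \<le> 2 * Suc (v div 2) + 1" unfolding 1 ladder_next_def by (rule ladder_vertex_le)
    with 1 have w: "w < 2 * N + 2" by simp
    have "ladder_edge N s w v" unfolding ladder_edge_iff[OF N] using 1 w by simp
    moreover have "w div 2 \<noteq> v div 2" using 1 by simp
    ultimately show ?thesis using v w by auto
  next
    case 2
    have "w \<le> 2 * (v div 2 - 1) + 1" unfolding 2 ladder_prev_def by (rule ladder_vertex_le)
    with 2 v have w: "w < 2 * N + 2" by linarith
    have "ladder_edge N s w v"
      unfolding ladder_edge_iff[OF N] using 2 v w ladder_next_prev[of v s] by auto
    moreover have "w div 2 \<noteq> v div 2" using 2 by simp
    ultimately show ?thesis using v w by auto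
  next
    case 3
    then consider "v = 1" "w = 2 * N + 1" | "v = 2 * N + 1" "w = 1" by blast
    then show ?thesis using N by cases (simp_all add: ladder_edge_iff[OF N])
  qed
qed

lemma ladder_nbr_columns_differ:
  assumes "2 \<le> N" "ladder_deg N v = 2"
  shows "ladder_nbr N s v 0 div 2 \<noteq> ladder_nbr N s v 1 div 2"
proof -
  have "v = 1 \<or> v = 2 * N + 1 \<or> 2 \<le> v \<and> v < 2 * N"
    using assms by (auto simp: ladder_deg_def split: if_splits)
  then show ?thesis
    using assms(1) by (elim disjE) (auto simp: ladder_nbr_def)
qed

lemma adj_array_ladder:
  assumes N: "2 \<le> N" and n: "2 * N + 2 \<le> n"
  shows "adj_array n (ladder_deg N) (ladder_nbr N s)"
  unfolding adj_array_def
proof (intro conjI allI impI)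
  fix v assume "n \<le> v"
  with n show "ladder_deg N v = 0" by (simp add: ladder_deg_def)
next
  fix v
  have "ladder_deg N v \<le> 1 \<or> ladder_deg N v = 2" by (simp add: ladder_deg_def)
  then show "inj_on (ladder_nbr N s v) {..<ladder_deg N v}"
    using ladder_nbr_columns_differ[OF N, of v s]
    by (auto simp: inj_on_def less_2_cases_iff)
next
  fix v j assume "j < ladder_deg N v"
  then have e: "ladder_edge N s v (ladder_nbr N s v j)" by (auto simp: adj_edge_def)
  then show "ladder_nbr N s v j \<noteq> v" using ladder_edge_sym[OF N e] by simp
  show "\<exists>k'<ladder_deg N (ladder_nbr N s v j). ladder_nbr N s (ladder_nbr N s v j) k' = v"
    using ladder_edge_sym[OF N e] by (simp add: adj_edge_def)
next
  fix v
  show "ladder_nbr N s v ` {..<ladder_deg N v} \<subseteq> {..<n}"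
  proof
    fix w assume "w \<in> ladder_nbr N s v ` {..<ladder_deg N v}"
    then have "ladder_edge N s v w" by (auto simp: adj_edge_def)
    with n show "w \<in> {..<n}" using ladder_edge_sym[OF N] by fastforce
  qed
qed

definition ladder_window :: "nat \<Rightarrow> nat set" where
  "ladder_window k = {v. v div 2 = k \<or> v div 2 = Suc k}"

lemma ladder_nbr_sym_diff:
  assumes "v \<notin> ladder_window k"
  shows "ladder_nbr N (sym_diff s {k}) v j = ladder_nbr N s v j"
proof -
  have "v div 2 \<noteq> k" "v div 2 - 1 \<noteq> k" using assms by (auto simp: ladder_window_def)
  then have "ladder_next (sym_diff s {k}) v = ladder_next s v" "ladder_prev (sym_diff s {k}) v = ladder_prev s v"
    by (auto simp: ladder_next_def ladder_prev_def)
  then show ?thesis unfolding ladder_nbr_def by (simp only:)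
qed

lemma card_ladder_windows_le: "card {k \<in> K. v \<in> ladder_window k} \<le> 2"
proof -
  have "{k \<in> K. v \<in> ladder_window k} \<subseteq> {v div 2, v div 2 - 1}"
    by (auto simp: ladder_window_def)
  then have "card {k \<in> K. v \<in> ladder_window k} \<le> card {v div 2, v div 2 - 1}"
    by (rule card_mono[rotated]) simp
  also have "\<dots> \<le> 2" by (rule card_insert_le_m1) simp_all
  finally show ?thesis .
qed

definition crossing_parity :: "nat set \<Rightarrow> nat \<Rightarrow> bool" where
  "crossing_parity s c = odd (card (s \<inter> {..<c}))"

lemma crossing_parity_0 [simp]: "crossing_parity s 0 = False"
  by (simp add: crossing_parity_def)

lemma crossing_parity_Suc: "crossing_parity s (Suc c) = (crossing_parity s c \<noteq> (c \<in> s))"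
proof (cases "c \<in> s")
  case True
  then have "s \<inter> {..<Suc c} = insert c (s \<inter> {..<c})" by auto
  with True show ?thesis by (simp add: crossing_parity_def)
next
  case False
  then have "s \<inter> {..<Suc c} = s \<inter> {..<c}" by (auto simp: less_Suc_eq)
  with False show ?thesis by (simp add: crossing_parity_def)
qed

lemma crossing_parity_all: "s \<subseteq> {..<N} \<Longrightarrow> crossing_parity s N = odd (card s)"
  by (simp add: crossing_parity_def Int_absorb2)

text \<open>For odd |s| the ladder is a single path: the strand of vertex 0 fills positions 0..N,
  and after the edge from 2N + 1 to 1 the other strand fills positions N + 1..2N + 1.\<close>
definition path_position :: "nat \<Rightarrow> nat set \<Rightarrow> nat \<Rightarrow> nat" where
  "path_position N s v =
     (if odd v = crossing_parity s (v div 2) then v div 2 else N + 1 + v div 2)"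

lemma path_position_edge:
  assumes N: "2 \<le> N" and s: "s \<subseteq> {..<N}" and odd: "odd (card s)"
    and e: "ladder_edge N s v w"
  shows "path_position N s w = Suc (path_position N s v) \<or> path_position N s v = Suc (path_position N s w)"
proof -
  consider "w = ladder_next s v" | "0 < v div 2" "w = ladder_prev s v"
    | "v = 1 \<and> w = 2 * N + 1 \<or> v = 2 * N + 1 \<and> w = 1"
    using e unfolding ladder_edge_iff[OF N] by (elim conjE disjE) auto
  then show ?thesis
  proof cases
    case 1
    then have "(odd w = crossing_parity s (w div 2)) = (odd v = crossing_parity s (v div 2))"
      by (auto simp: crossing_parity_Suc)
    with 1 show ?thesis by (simp add: path_position_def)
  next
    case 2
    then have c: "v div 2 = Suc (v div 2 - 1)" by simp
    have "crossing_parity s (v div 2) = (crossing_parity s (v div 2 - 1) \<noteq> (v div 2 - 1 \<in> s))"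
      by (subst c, rule crossing_parity_Suc)
    with 2 have "(odd w = crossing_parity s (w div 2)) = (odd v = crossing_parity s (v div 2))"
      by auto
    with 2 c show ?thesis by (auto simp: path_position_def)
  next
    case 3
    have "path_position N s 1 = N + 1" by (simp add: path_position_def)
    moreover have "path_position N s (2 * N + 1) = N"
      using crossing_parity_all[OF s] odd by (simp add: path_position_def)
    ultimately show ?thesis using 3 by auto
  qed
qed

lemma inj_on_path_position: "inj_on (path_position N s) {..<2 * N + 2}"
proof (rule inj_onI)
  fix v w assume "v \<in> {..<2 * N + 2}" "w \<in> {..<2 * N + 2}" and eq: "path_position N s v = path_position N s w"
  then have "v div 2 \<le> N" "w div 2 \<le> N" by auto
  with eq have "v div 2 = w div 2 \<and> (odd v = crossing_parity s (v div 2)) = (odd w = crossing_parity s (w div 2))"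
    unfolding path_position_def
    by (cases "odd v = crossing_parity s (v div 2)"; cases "odd w = crossing_parity s (w div 2)") simp_all
  then have "ladder_vertex (v div 2) (odd v) = ladder_vertex (w div 2) (odd w)" by auto
  then show "v = w" by (simp only: ladder_vertex_div_odd)
qed

lemma graph_bipartite_if_levels:
  assumes "\<And>u w. E u w \<Longrightarrow> \<pi> w = Suc (\<pi> u) \<or> \<pi> u = Suc (\<pi> w)"
  shows "graph_bipartite E"
  unfolding graph_bipartite_def
proof (intro exI allI impI)
  fix u w assume "E u w"
  with assms show "u \<in> {v. even (\<pi> v)} \<longleftrightarrow> w \<notin> {v. even (\<pi> v)}" by fastforce
qed

lemma graph_has_cycle_cyclic:
  assumes "graph_has_cycle E"
  shows "\<exists>vs. 3 \<le> length vs \<and> distinct vs \<and>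
           (\<forall>i<length vs. E (vs ! i) (vs ! (Suc i mod length vs)))"
proof -
  from assms obtain vs where len: "3 \<le> length vs" and "distinct vs"
    and step: "\<forall>i. i + 1 < length vs \<longrightarrow> E (vs ! i) (vs ! (i + 1))" and close: "E (last vs) (hd vs)"
    unfolding graph_has_cycle_def by blast
  have "E (vs ! i) (vs ! (Suc i mod length vs))" if i: "i < length vs" for i
  proof (cases "Suc i < length vs")
    case True
    with step show ?thesis by simp
  next
    case False
    with i have "i = length vs - 1" "Suc i = length vs" by simp_all
    moreover have "vs \<noteq> []" using len by auto
    ultimately show ?thesis using close by (simp add: last_conv_nth hd_conv_nth)
  qed
  with len \<open>distinct vs\<close> show ?thesis by blast
qed

text \<open>On a cycle, both neighbours of a vertex of minimal level lie one level higher, so an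
  injective levelling forces them to coincide.\<close>
lemma not_graph_has_cycle_if_levels:
  assumes level: "\<And>u w. E u w \<Longrightarrow> \<pi> w = Suc (\<pi> u) \<or> \<pi> u = Suc (\<pi> w)"
    and dom: "\<And>u w. E u w \<Longrightarrow> u \<in> D" and inj: "inj_on \<pi> D"
  shows "\<not> graph_has_cycle E"
proof
  assume "graph_has_cycle E"
  then obtain vs where len: "3 \<le> length vs" and dist: "distinct vs"
    and step: "\<forall>i<length vs. E (vs ! i) (vs ! (Suc i mod length vs))"
    using graph_has_cycle_cyclic by blast
  define L where "L = length vs"
  obtain i where i: "i < L" and min: "\<And>j. j < L \<Longrightarrow> \<pi> (vs ! i) \<le> \<pi> (vs ! j)"
  proof -
    have "Min (\<pi> ` set vs) \<in> \<pi> ` set vs" using len by (intro Min_in) auto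
    then obtain i where "i < L" "\<pi> (vs ! i) = Min (\<pi> ` set vs)" by (auto simp: in_set_conv_nth L_def)
    then show thesis by (intro that) (auto simp: L_def)
  qed
  define a where "a = (if Suc i = L then 0 else Suc i)"
  define b where "b = (if i = 0 then L - 1 else i - 1)"
  have "a < L" "b < L" "Suc i mod L = a" "Suc b mod L = i"
    using len i by (auto simp: a_def b_def L_def)
  have up: "\<pi> (vs ! j) = Suc (\<pi> (vs ! i))" if "j < L" "E (vs ! i) (vs ! j) \<or> E (vs ! j) (vs ! i)" for j
  proof -
    have "\<pi> (vs ! j) = Suc (\<pi> (vs ! i)) \<or> \<pi> (vs ! i) = Suc (\<pi> (vs ! j))"
      using that(2) level by blast
    with min[OF that(1)] show ?thesis by linarith
  qed
  have "E (vs ! i) (vs ! a)" "E (vs ! b) (vs ! i)"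
    using step[rule_format, of i] step[rule_format, of b] i \<open>b < L\<close> \<open>Suc i mod L = a\<close> \<open>Suc b mod L = i\<close> by (simp_all add: L_def)
  then have "\<pi> (vs ! a) = \<pi> (vs ! b)"
    using up[of a] up[of b] \<open>a < L\<close> \<open>b < L\<close> by simp
  moreover have "vs ! a \<in> D" "vs ! b \<in> D"
    using dom step[rule_format] \<open>a < L\<close> \<open>b < L\<close> by (auto simp: L_def)
  ultimately have "vs ! a = vs ! b" using inj by (simp add: inj_on_def)
  with dist \<open>a < L\<close> \<open>b < L\<close> have "a = b" by (simp add: nth_eq_iff_index_eq L_def)
  then show False using len i by (auto simp: a_def b_def L_def split: if_splits)
qed

lemma not_graph_bipartite_if_odd_cycle:
  assumes odd: "odd (length vs)" and step: "\<forall>i. i + 1 < length vs \<longrightarrow> E (vs ! i) (vs ! (i + 1))"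
    and close: "E (last vs) (hd vs)"
  shows "\<not> graph_bipartite E"
proof
  assume "graph_bipartite E"
  then obtain S where S: "\<And>u w. E u w \<Longrightarrow> u \<in> S \<longleftrightarrow> w \<notin> S" by (auto simp: graph_bipartite_def)
  have alternate: "vs ! i \<in> S \<longleftrightarrow> (vs ! 0 \<in> S \<longleftrightarrow> even i)" if "i < length vs" for i
    using that
  proof (induction i)
    case (Suc i)
    then have "E (vs ! i) (vs ! Suc i)" using step by simp
    with Suc S show ?case by auto
  qed simp
  have "vs \<noteq> []" using odd by auto
  then have "last vs = vs ! (length vs - 1)" "hd vs = vs ! 0" "even (length vs - 1)"
    using odd by (simp_all add: last_conv_nth hd_conv_nth)
  with alternate[of "length vs - 1"] S[OF close] \<open>vs \<noteq> []\<close> show False by simp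
qed

text \<open>The strand through vertex 1; for even |s| it ends at 2N + 1, so the extra edge closes it.\<close>
definition second_strand :: "nat \<Rightarrow> nat set \<Rightarrow> nat list" where
  "second_strand N s = map (\<lambda>c. ladder_vertex c (\<not> crossing_parity s c)) [0..<Suc N]"

lemma second_strand_cycle:
  assumes N: "2 \<le> N" and s: "s \<subseteq> {..<N}" and even: "even (card s)"
  shows "length (second_strand N s) = Suc N" "distinct (second_strand N s)"
    "\<forall>i. i + 1 < length (second_strand N s) \<longrightarrow>
       ladder_edge N s (second_strand N s ! i) (second_strand N s ! (i + 1))"
    "ladder_edge N s (last (second_strand N s)) (hd (second_strand N s))"
proof -
  let ?vs = "second_strand N s"
  show "length ?vs = Suc N" by (simp add: second_strand_def)
  show "distinct ?vs" by (simp add: second_strand_def distinct_map inj_on_def del: upt_Suc)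
  show "\<forall>i. i + 1 < length ?vs \<longrightarrow> ladder_edge N s (?vs ! i) (?vs ! (i + 1))"
  proof (intro allI impI)
    fix i assume "i + 1 < length ?vs"
    then have i: "i < N" by (simp add: second_strand_def)
    have "ladder_vertex i (\<not> crossing_parity s i) \<le> 2 * i + 1" by (rule ladder_vertex_le)
    with i have "ladder_vertex i (\<not> crossing_parity s i) < 2 * N + 2" by linarith
    moreover have "ladder_next s (ladder_vertex i (\<not> crossing_parity s i))
        = ladder_vertex (Suc i) (\<not> crossing_parity s (Suc i))"
      by (simp add: ladder_next_def crossing_parity_Suc)
    ultimately show "ladder_edge N s (?vs ! i) (?vs ! (i + 1))"
      using i by (simp add: second_strand_def ladder_edge_iff[OF N] nth_append del: upt_Suc)
  qed
  have "\<not> crossing_parity s N" using crossing_parity_all[OF s] even by simp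
  then have "last ?vs = 2 * N + 1"
    by (simp add: second_strand_def last_conv_nth ladder_vertex_def del: upt_Suc)
  moreover have "hd ?vs = 1" by (simp add: second_strand_def hd_conv_nth ladder_vertex_def del: upt_Suc)
  ultimately show "ladder_edge N s (last ?vs) (hd ?vs)" by (simp add: ladder_edge_iff[OF N])
qed

lemma ladder_odd_crossings:
  assumes N: "2 \<le> N" and s: "s \<subseteq> {..<N}" and odd: "odd (card s)"
  shows "graph_bipartite (ladder_edge N s)" "\<not> graph_has_cycle (ladder_edge N s)"
proof -
  show "graph_bipartite (ladder_edge N s)"
    by (rule graph_bipartite_if_levels) (rule path_position_edge[OF N s odd])
  show "\<not> graph_has_cycle (ladder_edge N s)"
  proof (rule not_graph_has_cycle_if_levels)
    fix u w assume e: "ladder_edge N s u w"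
    show "path_position N s w = Suc (path_position N s u) \<or> path_position N s u = Suc (path_position N s w)"
      by (rule path_position_edge[OF N s odd e])
    show "u \<in> {..<2 * N + 2}" using ladder_edge_sym[OF N e] by simp
  qed (rule inj_on_path_position)
qed

lemma ladder_even_crossings:
  assumes N: "2 \<le> N" "even N" and s: "s \<subseteq> {..<N}" and even: "even (card s)"
  shows "graph_has_cycle (ladder_edge N s)" "\<not> graph_bipartite (ladder_edge N s)"
proof -
  note cycle = second_strand_cycle[OF N(1) s even]
  show "graph_has_cycle (ladder_edge N s)"
    unfolding graph_has_cycle_def using cycle N(1) by (intro exI[of _ "second_strand N s"]) simp
  show "\<not> graph_bipartite (ladder_edge N s)"
    using cycle N by (intro not_graph_bipartite_if_odd_cycle[of "second_strand N s"]) simp_all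
qed

lemma odd_card_sym_diff_singleton:
  assumes "finite s"
  shows "odd (card (sym_diff s {k})) \<longleftrightarrow> even (card s)"
proof (cases "k \<in> s")
  case True
  then have "sym_diff s {k} = s - {k}" by auto
  with True assms show ?thesis by (auto simp: card_Diff_singleton)
next
  case False
  then have "sym_diff s {k} = insert k s" by auto
  with False assms show ?thesis by simp
qed

lemma parity_property_query_lower_bound:
  assumes n: "10 \<le> n"
    and parity: "\<And>N s. 2 \<le> N \<Longrightarrow> even N \<Longrightarrow> s \<subseteq> {..<N} \<Longrightarrow>
                   P (ladder_edge N s) \<longleftrightarrow> (odd (card s) \<longleftrightarrow> b)"
    and decides: "decides_bounded_error n P m T U Acc"
  shows "real n / 288 \<le> real T"
proof -
  define N where "N = 2 * ((n - 2) div 4)"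
  have N: "2 \<le> N" "even N" "2 * N + 2 \<le> n" "n \<le> 4 * N"
    using n unfolding N_def by presburger+
  interpret toggle_sensitive_inputs n m T U Acc P N "ladder_deg N" "ladder_nbr N" ladder_window
  proof
    show "decides_bounded_error n P m T U Acc" by (rule decides)
    show "adj_array n (ladder_deg N) (ladder_nbr N s)" for s using adj_array_ladder N by simp
    show "ladder_nbr N (sym_diff s {k}) v j = ladder_nbr N s v j" if "v \<notin> ladder_window k" for s k v j
      using that by (rule ladder_nbr_sym_diff)
    show "card {k \<in> {..<N}. v \<in> ladder_window k} \<le> 2" for v by (rule card_ladder_windows_le)
    show "0 < N" using N by simp
    fix s k assume s: "s \<subseteq> {..<N}" and "k < N"
    then have "sym_diff s {k} \<subseteq> {..<N}" by auto
    with s N show "P (ladder_edge N (sym_diff s {k})) \<noteq> P (ladder_edge N s)"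
      using odd_card_sym_diff_singleton[of s k] finite_subset[OF s] by (simp add: parity)
  qed
  show ?thesis using queries_lower_bound N by linarith
qed

theorem lemma3:
  shows "(\<exists>c>0. \<exists>N. \<forall>n\<ge>N. \<forall>m T U Acc.
            decides_bounded_error n graph_bipartite m T U Acc \<longrightarrow> real T \<ge> c * real n) \<and>
         (\<exists>c>0. \<exists>N. \<forall>n\<ge>N. \<forall>m T U Acc.
            decides_bounded_error n graph_has_cycle m T U Acc \<longrightarrow> real T \<ge> c * real n)"
proof -
  have bipartite: "graph_bipartite (ladder_edge N s) \<longleftrightarrow> (odd (card s) \<longleftrightarrow> True)"
    and cycle: "graph_has_cycle (ladder_edge N s) \<longleftrightarrow> (odd (card s) \<longleftrightarrow> False)"
    if "2 \<le> N" "even N" "s \<subseteq> {..<N}" for N s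
    using ladder_odd_crossings[OF that(1,3)] ladder_even_crossings[OF that] by auto
  show ?thesis
    using parity_property_query_lower_bound[OF _ bipartite]
      parity_property_query_lower_bound[OF _ cycle]
    by (intro conjI exI[of _ "1/288"] exI[of _ 10]) auto
qed

end
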